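(* Let $u$ be a drift function and $\alpha>0$. Then for every $f\in\mathcal E^1_u$ and every $x\in\mathbf X$, \[\frac{1}{n^{1+\alpha}}f(X_n)\xrightarrow[n\to\infty]{}0\quad\mathbb P_x\text{-a.s. and in }\mathrm L^1(\mathbb P_x).\]
   Context: $(X_n)$ Markov chain on a complete separable metric space $\mathbf X$, $\mathbb P_x$ its law from $x$, $Pf(x)=\mathbb E_xf(X_1)$. $\tau$ is a $\theta$-compatible stopping time ($\mathbb P_x(\tau=0)=0$ and $\mathbb P_x$-a.s. $\tau\ge2\Rightarrow\tau\circ\theta=\tau-1$) with $\mathbb E_x\tau<\infty$ for all $x$; $Qf(x)=\mathbb E_x[f(X_\tau)\mathbf 1_{\tau<\infty}]$. A drift function is a Borel $u:\mathbf X\to[1,\infty)$ such that $u-Pu$ is bounded below and $Qu$, $x\mapsto\mathbb E_x\tau/u(x)$ and $P(u-Pu+B_u)/(u-Pu+B_u)$ are bounded on $\mathbf X$, where $B_u=\sup(Pu-u)+1$. For Borel $v\ge1$, $\mathcal F^p_v$ is the space of Borel $f$ with $\sup|f|^p/v<\infty$; $\mathcal E^p_u:=\mathcal F^p_{u-Pu+B_u}$. *)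

theory Defs
  imports "HOL-Probability.Probability"
begin

text \<open>Canonical setting: the path space is the stream space over the Borel
  sigma-algebra of X; X_n(omega) = omega !! n and the shift theta is stl.\<close>

abbreviation path_space :: "'a::topological_space stream measure" where
  "path_space \<equiv> stream_space borel"

text \<open>Px x is the law of the Markov chain with transition kernel K started at x.
  The recursive equation characterises it uniquely (Ionescu-Tulcea).\<close>
definition markov_chain_law ::
  "('a::polish_space \<Rightarrow> 'a measure) \<Rightarrow> ('a \<Rightarrow> 'a stream measure) \<Rightarrow> bool" where
  "markov_chain_law K Px \<longleftrightarrow>
     K \<in> borel \<rightarrow>\<^sub>M prob_algebra borel \<and>
     Px \<in> borel \<rightarrow>\<^sub>M prob_algebra path_space \<and>
     (\<forall>x. Px x = K x \<bind> (\<lambda>y. distr (Px y) path_space (\<lambda>\<omega>. x ## \<omega>)))"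

definition nat_filtration :: "enat \<Rightarrow> 'a::topological_space stream measure" where
  "nat_filtration t = (case t of
      enat n \<Rightarrow> vimage_algebra (space path_space) (\<lambda>\<omega>. \<lambda>i\<in>{..n}. \<omega> !! i)
                  (PiM {..n} (\<lambda>_. borel))
    | \<infinity> \<Rightarrow> path_space)"

definition Pop :: "('a::polish_space \<Rightarrow> 'a stream measure) \<Rightarrow> ('a \<Rightarrow> real) \<Rightarrow> 'a \<Rightarrow> real" where
  "Pop Px f x = (\<integral>\<omega>. f (\<omega> !! 1) \<partial>Px x)"

definition Qop :: "('a::polish_space \<Rightarrow> 'a stream measure) \<Rightarrow> ('a stream \<Rightarrow> enat) \<Rightarrow> ('a \<Rightarrow> real) \<Rightarrow> 'a \<Rightarrow> ennreal" where
  "Qop Px \<tau> f x = (\<integral>\<^sup>+\<omega>. (if \<tau> \<omega> < \<infinity> then ennreal (f (\<omega> !! the_enat (\<tau> \<omega>))) else 0) \<partial>Px x)"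

definition theta_compatible :: "('a::polish_space \<Rightarrow> 'a stream measure) \<Rightarrow> ('a stream \<Rightarrow> enat) \<Rightarrow> bool" where
  "theta_compatible Px \<tau> \<longleftrightarrow>
     stopping_time nat_filtration \<tau> \<and>
     (\<forall>x. \<P>(\<omega> in Px x. \<tau> \<omega> = 0) = 0) \<and>
     (\<forall>x. AE \<omega> in Px x. \<tau> \<omega> \<ge> 2 \<longrightarrow> \<tau> (stl \<omega>) = \<tau> \<omega> - 1)"

definition Bconst :: "('a::polish_space \<Rightarrow> 'a stream measure) \<Rightarrow> ('a \<Rightarrow> real) \<Rightarrow> real" where
  "Bconst Px u = (SUP x. Pop Px u x - u x) + 1"

definition wfun :: "('a::polish_space \<Rightarrow> 'a stream measure) \<Rightarrow> ('a \<Rightarrow> real) \<Rightarrow> 'a \<Rightarrow> real" where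
  "wfun Px u x = u x - Pop Px u x + Bconst Px u"

definition drift_function ::
  "('a::polish_space \<Rightarrow> 'a stream measure) \<Rightarrow> ('a stream \<Rightarrow> enat) \<Rightarrow> ('a \<Rightarrow> real) \<Rightarrow> bool" where
  "drift_function Px \<tau> u \<longleftrightarrow>
     u \<in> borel_measurable borel \<and> (\<forall>x. u x \<ge> 1) \<and>
     (\<forall>x. integrable (Px x) (\<lambda>\<omega>. u (\<omega> !! 1))) \<and>
     bdd_below (range (\<lambda>x. u x - Pop Px u x)) \<and>
     (\<exists>C. \<forall>x. Qop Px \<tau> u x \<le> ennreal C) \<and>
     (\<exists>C. \<forall>x. enn2real (\<integral>\<^sup>+\<omega>. ennreal_of_enat (\<tau> \<omega>) \<partial>Px x) / u x \<le> C) \<and>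
     (\<exists>C. \<forall>x. (\<integral>\<^sup>+\<omega>. ennreal (wfun Px u (\<omega> !! 1)) \<partial>Px x) \<le> ennreal (C * wfun Px u x))"

definition Fspace :: "real \<Rightarrow> ('a::topological_space \<Rightarrow> real) \<Rightarrow> ('a \<Rightarrow> real) set" where
  "Fspace p v = {f. f \<in> borel_measurable borel \<and> (\<exists>C. \<forall>x. \<bar>f x\<bar> powr p / v x \<le> C)}"

definition Espace :: "real \<Rightarrow> ('a::polish_space \<Rightarrow> 'a stream measure) \<Rightarrow> ('a \<Rightarrow> real) \<Rightarrow> ('a \<Rightarrow> real) set" where
  "Espace p Px u = Fspace p (wfun Px u)"

end

theory Submission
  imports Defs "HOL-Real_Asymp.Real_Asymp"
begin

text \<open>For \<open>W = u - Pu + B\<^sub>u \<ge> 1\<close> the drift inequality telescopes along the chain: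
  \<open>\<Sum>k<n. E\<^sub>x W(X\<^sub>k) \<le> u(x) + n B\<^sub>u\<close>. As \<open>|f| \<le> C W\<close>, this bounds \<open>E\<^sub>x |f(X\<^sub>n)|\<close> linearly
  in \<open>n\<close>, which gives the \<open>L\<^sup>1\<close> statement. Summation by parts turns the same linear bound into
  \<open>E\<^sub>x \<Sum>n. W(X\<^sub>n) / (n+1)\<^sup>1\<^sup>+\<^sup>\<alpha> < \<infinity>\<close>, so the terms of that series tend to \<open>0\<close> almost surely.\<close>

section \<open>The canonical Markov chain\<close>

lemma markov_chain_lawD:
  assumes "markov_chain_law K Px"
  shows "K \<in> borel \<rightarrow>\<^sub>M prob_algebra borel" "Px \<in> borel \<rightarrow>\<^sub>M prob_algebra path_space"
    and "Px x = K x \<bind> (\<lambda>y. distr (Px y) path_space (\<lambda>\<omega>. x ## \<omega>))"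
  using assms unfolding markov_chain_law_def by blast+

lemma
  assumes "markov_chain_law K Px"
  shows prob_space_markov_kernel: "prob_space (K x)"
    and sets_markov_kernel: "sets (K x) = sets borel"
    and prob_space_markov_chain_law: "prob_space (Px x)"
    and sets_markov_chain_law: "sets (Px x) = sets path_space"
proof -
  have "K x \<in> space (prob_algebra borel)" "Px x \<in> space (prob_algebra path_space)"
    using markov_chain_lawD(1,2)[OF assms] by (auto intro: measurable_space)
  then show "prob_space (K x)" "sets (K x) = sets borel"
    and "prob_space (Px x)" "sets (Px x) = sets path_space"
    by (auto simp: space_prob_algebra)
qed

lemma measurable_snth_markov_chain_law:
  assumes "markov_chain_law K Px" and "g \<in> borel_measurable borel"
  shows "(\<lambda>\<omega>. g (\<omega> !! k)) \<in> borel_measurable (Px x)"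
  by (subst measurable_cong_sets[OF sets_markov_chain_law[OF assms(1)] refl])
    (rule measurable_compose[OF measurable_snth assms(2)])

lemma nn_integral_markov_chain_law:
  assumes mc: "markov_chain_law K Px" and g[measurable]: "g \<in> borel_measurable path_space"
  shows "(\<integral>\<^sup>+\<omega>. g \<omega> \<partial>Px x) = (\<integral>\<^sup>+y. (\<integral>\<^sup>+\<omega>. g (x ## \<omega>) \<partial>Px y) \<partial>K x)"
proof -
  have Px: "Px \<in> K x \<rightarrow>\<^sub>M prob_algebra path_space"
    using markov_chain_lawD(2)[OF mc] by (subst measurable_cong_sets[OF sets_markov_kernel[OF mc] refl])
  have N: "(\<lambda>y. distr (Px y) path_space (\<lambda>\<omega>. x ## \<omega>)) \<in> K x \<rightarrow>\<^sub>M subprob_algebra path_space"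
    by (intro measurable_prob_algebraD measurable_distr_prob_space2[OF Px]) measurable
  have "(\<integral>\<^sup>+\<omega>. g \<omega> \<partial>Px x) = (\<integral>\<^sup>+y. (\<integral>\<^sup>+\<omega>. g \<omega> \<partial>distr (Px y) path_space (\<lambda>\<omega>. x ## \<omega>)) \<partial>K x)"
    by (subst markov_chain_lawD(3)[OF mc]) (rule nn_integral_bind[OF g N])
  also have "\<dots> = (\<integral>\<^sup>+y. (\<integral>\<^sup>+\<omega>. g (x ## \<omega>) \<partial>Px y) \<partial>K x)"
  proof (rule nn_integral_cong)
    fix y
    have "(\<lambda>\<omega>. x ## \<omega>) \<in> Px y \<rightarrow>\<^sub>M path_space"
      by (subst measurable_cong_sets[OF sets_markov_chain_law[OF mc] refl]) measurable
    then show "(\<integral>\<^sup>+\<omega>. g \<omega> \<partial>distr (Px y) path_space (\<lambda>\<omega>. x ## \<omega>)) = (\<integral>\<^sup>+\<omega>. g (x ## \<omega>) \<partial>Px y)"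
      by (rule nn_integral_distr) measurable
  qed
  finally show ?thesis .
qed

lemma
  fixes h :: "'a::polish_space \<Rightarrow> ennreal"
  assumes mc: "markov_chain_law K Px" and h: "h \<in> borel_measurable borel"
  shows nn_integral_snth_0: "(\<integral>\<^sup>+\<omega>. h (\<omega> !! 0) \<partial>Px x) = h x"
    and nn_integral_snth_Suc:
      "(\<integral>\<^sup>+\<omega>. h (\<omega> !! Suc k) \<partial>Px x) = (\<integral>\<^sup>+y. (\<integral>\<^sup>+\<omega>. h (\<omega> !! k) \<partial>Px y) \<partial>K x)"
proof -
  have hk: "(\<lambda>\<omega>. h (\<omega> !! k)) \<in> borel_measurable path_space" for k
    by (rule measurable_compose[OF measurable_snth h])
  show "(\<integral>\<^sup>+\<omega>. h (\<omega> !! Suc k) \<partial>Px x) = (\<integral>\<^sup>+y. (\<integral>\<^sup>+\<omega>. h (\<omega> !! k) \<partial>Px y) \<partial>K x)"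
    by (subst nn_integral_markov_chain_law[OF mc hk]) simp
  have "(\<integral>\<^sup>+\<omega>. h (\<omega> !! 0) \<partial>Px x) = (\<integral>\<^sup>+y. (\<integral>\<^sup>+\<omega>. h x \<partial>Px y) \<partial>K x)"
    by (subst nn_integral_markov_chain_law[OF mc hk]) simp
  then show "(\<integral>\<^sup>+\<omega>. h (\<omega> !! 0) \<partial>Px x) = h x"
    by (simp add: prob_space.emeasure_space_1 prob_space_markov_kernel[OF mc] prob_space_markov_chain_law[OF mc])
qed

lemma borel_measurable_nn_integral_snth_1:
  fixes h :: "'a::polish_space \<Rightarrow> ennreal"
  assumes mc: "markov_chain_law K Px" and h: "h \<in> borel_measurable borel"
  shows "(\<lambda>y. \<integral>\<^sup>+\<omega>. h (\<omega> !! 1) \<partial>Px y) \<in> borel_measurable borel"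
proof -
  have "(\<integral>\<^sup>+\<omega>. h (\<omega> !! 1) \<partial>Px y) = (\<integral>\<^sup>+z. h z \<partial>K y)" for y
    using nn_integral_snth_Suc[OF mc h, of _ 0] nn_integral_snth_0[OF mc h] by simp
  moreover have "K \<in> borel \<rightarrow>\<^sub>M subprob_algebra borel"
    using markov_chain_lawD(1)[OF mc] by (rule measurable_prob_algebraD)
  ultimately show ?thesis
    using measurable_compose[OF _ nn_integral_measurable_subprob_algebra[OF h]] by simp
qed

lemma nn_integral_snth_Suc_markov:
  fixes h :: "'a::polish_space \<Rightarrow> ennreal"
  assumes mc: "markov_chain_law K Px" and h: "h \<in> borel_measurable borel"
  shows "(\<integral>\<^sup>+\<omega>. h (\<omega> !! Suc k) \<partial>Px x) = (\<integral>\<^sup>+\<omega>. (\<integral>\<^sup>+\<omega>'. h (\<omega>' !! 1) \<partial>Px (\<omega> !! k)) \<partial>Px x)"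
proof (induction k arbitrary: x)
  case 0
  then show ?case
    using nn_integral_snth_0[OF mc borel_measurable_nn_integral_snth_1[OF mc h]] by simp
next
  case (Suc k)
  then show ?case
    by (simp only: nn_integral_snth_Suc[OF mc h, of _ "Suc k"]
        nn_integral_snth_Suc[OF mc borel_measurable_nn_integral_snth_1[OF mc h], of _ k])
qed

section \<open>Drift functions\<close>

lemma drift_functionD:
  assumes "drift_function Px \<tau> u"
  shows "u \<in> borel_measurable borel" "1 \<le> u x" "integrable (Px x) (\<lambda>\<omega>. u (\<omega> !! 1))"
    and "bdd_below (range (\<lambda>x. u x - Pop Px u x))"
  using assms unfolding drift_function_def by simp_all

lemma wfun_ge_1:
  assumes "bdd_below (range (\<lambda>x. u x - Pop Px u x))"
  shows "wfun Px u y \<ge> 1"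
proof -
  obtain m where "\<And>x. m \<le> u x - Pop Px u x"
    using assms unfolding bdd_below_def by blast
  then have "bdd_above (range (\<lambda>x. Pop Px u x - u x))"
    by (intro bdd_aboveI2[where M = "- m"]) (simp add: algebra_simps)
  then have "Pop Px u y - u y \<le> (SUP x. Pop Px u x - u x)"
    by (rule cSUP_upper[rotated]) simp
  then show ?thesis
    by (simp add: wfun_def Bconst_def)
qed

lemma Pop_nonneg: "(\<And>y. 0 \<le> u y) \<Longrightarrow> 0 \<le> Pop Px u x"
  unfolding Pop_def by (simp add: integral_nonneg)

lemma nn_integral_snth_1_eq_Pop:
  assumes "integrable (Px x) (\<lambda>\<omega>. u (\<omega> !! 1))" and "\<And>y. 0 \<le> u y"
  shows "(\<integral>\<^sup>+\<omega>. ennreal (u (\<omega> !! 1)) \<partial>Px x) = ennreal (Pop Px u x)"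
  unfolding Pop_def using assms by (intro nn_integral_eq_integral) auto

lemma borel_measurable_Pop:
  assumes mc: "markov_chain_law K Px" and u: "u \<in> borel_measurable borel"
    and "\<And>x. integrable (Px x) (\<lambda>\<omega>. u (\<omega> !! 1))" and "\<And>y. 0 \<le> u y"
  shows "Pop Px u \<in> borel_measurable borel"
proof -
  have un: "(\<lambda>y. ennreal (u y)) \<in> borel_measurable borel"
    using u by measurable
  have "Pop Px u = (\<lambda>x. enn2real (\<integral>\<^sup>+\<omega>. ennreal (u (\<omega> !! 1)) \<partial>Px x))"
    unfolding nn_integral_snth_1_eq_Pop[where Px=Px and u=u, OF assms(3,4)]
    using Pop_nonneg[where u=u, OF assms(4)] by simp
  then show ?thesis
    using borel_measurable_enn2real[OF borel_measurable_nn_integral_snth_1[OF mc un]] by simp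
qed

lemma borel_measurable_wfun:
  assumes mc: "markov_chain_law K Px" and dr: "drift_function Px \<tau> u"
  shows "wfun Px u \<in> borel_measurable borel"
proof -
  note [measurable] = drift_functionD(1)[OF dr]
  have "0 \<le> u y" for y
    using drift_functionD(2)[OF dr, of y] by simp
  then have [measurable]: "Pop Px u \<in> borel_measurable borel"
    using borel_measurable_Pop[OF mc drift_functionD(1,3)[OF dr]] by blast
  show ?thesis
    unfolding wfun_def[abs_def] by measurable
qed

text \<open>One step of the telescoping: \<open>W + Pu = u + B\<^sub>u\<close>, and \<open>E\<^sub>x (Pu)(X\<^sub>k) = E\<^sub>x u(X\<^sub>k\<^sub>+\<^sub>1)\<close>
  by the Markov property.\<close>

lemma nn_integral_wfun_snth_plus_le:
  assumes mc: "markov_chain_law K Px" and dr: "drift_function Px \<tau> u"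
  shows "(\<integral>\<^sup>+\<omega>. ennreal (wfun Px u (\<omega> !! k)) \<partial>Px x) + (\<integral>\<^sup>+\<omega>. ennreal (u (\<omega> !! Suc k)) \<partial>Px x)
           \<le> (\<integral>\<^sup>+\<omega>. ennreal (u (\<omega> !! k)) \<partial>Px x) + ennreal (max (Bconst Px u) 0)"
proof -
  define B where "B = max (Bconst Px u) 0"
  define Eu where "Eu y = (\<integral>\<^sup>+\<omega>. ennreal (u (\<omega> !! 1)) \<partial>Px y)" for y
  note [measurable] = drift_functionD(1)[OF dr] borel_measurable_wfun[OF mc dr]
  note ui = drift_functionD(3)[OF dr]
  have u0: "0 \<le> u y" for y
    using drift_functionD(2)[OF dr, of y] by simp
  have un: "(\<lambda>y. ennreal (u y)) \<in> borel_measurable borel"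
    by measurable
  have pointwise: "ennreal (wfun Px u y) + Eu y \<le> ennreal (u y) + ennreal B" for y
  proof -
    have "ennreal (wfun Px u y) + Eu y = ennreal (wfun Px u y + Pop Px u y)"
      unfolding Eu_def nn_integral_snth_1_eq_Pop[where Px=Px and u=u, OF ui u0]
      using wfun_ge_1[OF drift_functionD(4)[OF dr], of y] Pop_nonneg[where u=u, OF u0]
      by (simp add: ennreal_plus)
    also have "\<dots> \<le> ennreal (u y + B)"
      by (rule ennreal_leI) (simp add: wfun_def B_def)
    finally show ?thesis
      using u0[of y] by (simp add: B_def ennreal_plus)
  qed
  have "(\<integral>\<^sup>+\<omega>. ennreal (wfun Px u (\<omega> !! k)) \<partial>Px x) + (\<integral>\<^sup>+\<omega>. ennreal (u (\<omega> !! Suc k)) \<partial>Px x)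
      = (\<integral>\<^sup>+\<omega>. ennreal (wfun Px u (\<omega> !! k)) + Eu (\<omega> !! k) \<partial>Px x)"
    unfolding Eu_def nn_integral_snth_Suc_markov[OF mc un]
    by (intro nn_integral_add[symmetric] measurable_snth_markov_chain_law[OF mc]
        borel_measurable_nn_integral_snth_1[OF mc un]) measurable
  also have "\<dots> \<le> (\<integral>\<^sup>+\<omega>. ennreal (u (\<omega> !! k)) + ennreal B \<partial>Px x)"
    by (intro nn_integral_mono pointwise)
  also have "\<dots> = (\<integral>\<^sup>+\<omega>. ennreal (u (\<omega> !! k)) \<partial>Px x) + ennreal B"
    using prob_space_markov_chain_law[OF mc]
    by (subst nn_integral_add) (auto intro: measurable_snth_markov_chain_law[OF mc]
        simp: prob_space.emeasure_space_1)
  finally show ?thesis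
    unfolding B_def .
qed

lemma sum_nn_integral_wfun_snth_le:
  assumes mc: "markov_chain_law K Px" and dr: "drift_function Px \<tau> u"
  shows "(\<Sum>k<n. \<integral>\<^sup>+\<omega>. ennreal (wfun Px u (\<omega> !! k)) \<partial>Px x)
           \<le> ennreal (u x + max (Bconst Px u) 0 * real n)"
proof -
  define B where "B = ennreal (max (Bconst Px u) 0)"
  define Eu where "Eu k = (\<integral>\<^sup>+\<omega>. ennreal (u (\<omega> !! k)) \<partial>Px x)" for k
  define EW where "EW k = (\<integral>\<^sup>+\<omega>. ennreal (wfun Px u (\<omega> !! k)) \<partial>Px x)" for k
  have "(\<Sum>k<n. EW k) + Eu n \<le> ennreal (u x) + of_nat n * B"
  proof (induction n)
    case 0
    show ?case
      using nn_integral_snth_0[OF mc, of "\<lambda>y. ennreal (u y)"] drift_functionD(1)[OF dr]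
      by (simp add: Eu_def)
  next
    case (Suc n)
    have "(\<Sum>k<Suc n. EW k) + Eu (Suc n) = (\<Sum>k<n. EW k) + (EW n + Eu (Suc n))"
      by (simp add: add.assoc)
    also have "\<dots> \<le> (\<Sum>k<n. EW k) + (Eu n + B)"
      unfolding EW_def Eu_def B_def
      by (rule add_left_mono[OF nn_integral_wfun_snth_plus_le[OF mc dr]])
    also have "\<dots> \<le> (ennreal (u x) + of_nat n * B) + B"
      using add_right_mono[OF Suc.IH] by (simp add: add.assoc add.commute add.left_commute)
    also have "\<dots> = ennreal (u x) + of_nat (Suc n) * B"
      by (simp add: distrib_right add.assoc)
    finally show ?case .
  qed
  then have "(\<Sum>k<n. EW k) \<le> ennreal (u x) + of_nat n * B"
    by (rule order_trans[rotated]) simp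
  also have "\<dots> = ennreal (u x + max (Bconst Px u) 0 * real n)"
    using drift_functionD(2)[OF dr, of x]
    by (simp add: B_def ennreal_plus ennreal_mult ennreal_of_nat_eq_real_of_nat mult.commute)
  finally show ?thesis
    by (simp add: EW_def)
qed

lemma
  assumes mc: "markov_chain_law K Px" and dr: "drift_function Px \<tau> u"
  shows integrable_wfun_snth: "integrable (Px x) (\<lambda>\<omega>. wfun Px u (\<omega> !! n))"
    and sum_integral_wfun_snth_le:
      "(\<Sum>k<n. \<integral>\<omega>. wfun Px u (\<omega> !! k) \<partial>Px x) \<le> u x + max (Bconst Px u) 0 * real n"
proof -
  have W0: "0 \<le> wfun Px u y" for y
    using wfun_ge_1[OF drift_functionD(4)[OF dr], of y] by simp
  have Wm: "(\<lambda>\<omega>. wfun Px u (\<omega> !! k)) \<in> borel_measurable (Px x)" for k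
    by (rule measurable_snth_markov_chain_law[OF mc borel_measurable_wfun[OF mc dr]])
  have bound0: "0 \<le> u x + max (Bconst Px u) 0 * real m" for m
    using drift_functionD(2)[OF dr, of x] by simp
  have "(\<integral>\<^sup>+\<omega>. ennreal (wfun Px u (\<omega> !! k)) \<partial>Px x)
      \<le> (\<Sum>j<Suc k. \<integral>\<^sup>+\<omega>. ennreal (wfun Px u (\<omega> !! j)) \<partial>Px x)" for k
    by (rule member_le_sum) auto
  also have "\<dots> k \<le> ennreal (u x + max (Bconst Px u) 0 * real (Suc k))" for k
    by (rule sum_nn_integral_wfun_snth_le[OF mc dr])
  finally have "(\<integral>\<^sup>+\<omega>. ennreal (wfun Px u (\<omega> !! k)) \<partial>Px x) < \<infinity>" for k
    by (rule order_le_less_trans) simp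
  then show integrable: "integrable (Px x) (\<lambda>\<omega>. wfun Px u (\<omega> !! k))" for k
    using W0 by (intro integrableI_bounded[OF Wm]) simp
  have "ennreal (\<Sum>k<n. \<integral>\<omega>. wfun Px u (\<omega> !! k) \<partial>Px x)
      = (\<Sum>k<n. \<integral>\<^sup>+\<omega>. ennreal (wfun Px u (\<omega> !! k)) \<partial>Px x)"
    using W0 integrable by (simp add: nn_integral_eq_integral integral_nonneg)
  also have "\<dots> \<le> ennreal (u x + max (Bconst Px u) 0 * real n)"
    by (rule sum_nn_integral_wfun_snth_le[OF mc dr])
  finally show "(\<Sum>k<n. \<integral>\<omega>. wfun Px u (\<omega> !! k) \<partial>Px x) \<le> u x + max (Bconst Px u) 0 * real n"
    by (subst (asm) ennreal_le_iff[OF bound0])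
qed

section \<open>Growth of processes with Cesaro-bounded means\<close>

lemma sum_mult_le_of_partial_sums_le:
  fixes c x :: "nat \<Rightarrow> real"
  assumes dec: "\<And>n. c (Suc n) \<le> c n" and c0: "\<And>n. 0 \<le> c n"
    and S: "\<And>N. (\<Sum>n<N. x n) \<le> A + B * real N"
  shows "(\<Sum>n<N. c n * x n) \<le> A * c 0 + B * (\<Sum>n<N. c n)"
proof -
  have invariant: "(\<Sum>n<N. c n * x n) + c N * (A + B * real N - (\<Sum>n<N. x n))
      \<le> A * c 0 + B * (\<Sum>n<N. c n)" for N
  proof (induction N)
    case 0
    then show ?case by (simp add: mult.commute)
  next
    case (Suc N)
    define D where "D = A + B * real (Suc N) - (\<Sum>n<Suc N. x n)"
    have "0 \<le> D"
      using S[of "Suc N"] unfolding D_def by simp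
    then have "c (Suc N) * D \<le> c N * D"
      by (rule mult_right_mono[OF dec])
    moreover have "A + B * real N - (\<Sum>n<N. x n) = D + x N - B"
      unfolding D_def by (simp add: algebra_simps)
    ultimately show ?case
      using Suc.IH unfolding D_def by (simp add: algebra_simps)
  qed
  have "0 \<le> c N * (A + B * real N - (\<Sum>n<N. x n))"
    using S[of N] c0[of N] by simp
  then show ?thesis
    using invariant[of N] by linarith
qed

lemma AE_tendsto_zero_div_powr:
  fixes Z :: "nat \<Rightarrow> 'a \<Rightarrow> real" and \<alpha> :: real
  assumes int: "\<And>n. integrable M (Z n)" and nonneg: "\<And>n \<omega>. 0 \<le> Z n \<omega>"
    and S: "\<And>N. (\<Sum>n<N. \<integral>\<omega>. Z n \<omega> \<partial>M) \<le> A + B * real N" and "0 < \<alpha>"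
  shows "AE \<omega> in M. (\<lambda>n. Z n \<omega> / real n powr (1 + \<alpha>)) \<longlonglongrightarrow> 0"
proof -
  define c where "c n = 1 / real (Suc n) powr (1 + \<alpha>)" for n
  have ratio: "(\<lambda>n. real (Suc n) powr (1 + \<alpha>) / real n powr (1 + \<alpha>)) \<longlonglongrightarrow> 1"
    by real_asymp
  have c0: "0 \<le> c n" for n
    by (simp add: c_def)
  have "summable (\<lambda>n. real (Suc n) powr - (1 + \<alpha>))"
    using \<open>0 < \<alpha>\<close> by (subst summable_Suc_iff) (simp add: summable_real_powr_iff)
  then have "summable c"
    unfolding c_def by (simp only: powr_minus_divide)
  have "summable (\<lambda>n. c n * (\<integral>\<omega>. Z n \<omega> \<partial>M))"
  proof (rule bounded_imp_summable)
    show "0 \<le> c n * (\<integral>\<omega>. Z n \<omega> \<partial>M)" for n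
      using c0 nonneg by simp
    show "(\<Sum>k\<le>n. c k * (\<integral>\<omega>. Z k \<omega> \<partial>M)) \<le> A * c 0 + max B 0 * suminf c" for n
    proof -
      have "(\<Sum>k\<le>n. c k * (\<integral>\<omega>. Z k \<omega> \<partial>M)) \<le> A * c 0 + B * (\<Sum>k<Suc n. c k)"
        unfolding lessThan_Suc_atMost[symmetric]
        by (rule sum_mult_le_of_partial_sums_le[OF _ c0 S])
          (use \<open>0 < \<alpha>\<close> in \<open>auto simp: c_def intro!: divide_left_mono powr_mono2\<close>)
      also have "\<dots> \<le> A * c 0 + max B 0 * (\<Sum>k<Suc n. c k)"
        using c0 by (intro add_left_mono mult_right_mono sum_nonneg) auto
      also have "\<dots> \<le> A * c 0 + max B 0 * suminf c"
        using c0 by (intro add_left_mono mult_left_mono sum_le_suminf[OF \<open>summable c\<close>]) auto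
      finally show ?thesis .
    qed
  qed
  moreover have "(\<integral>\<^sup>+\<omega>. ennreal (c n * Z n \<omega>) \<partial>M) = ennreal (c n * (\<integral>\<omega>. Z n \<omega> \<partial>M))" for n
    using int c0 nonneg by (simp add: nn_integral_eq_integral)
  ultimately have "(\<integral>\<^sup>+\<omega>. (\<Sum>n. ennreal (c n * Z n \<omega>)) \<partial>M) \<noteq> \<infinity>"
    using int c0 nonneg
    by (simp add: nn_integral_suminf ennreal_suminf_neq_top del: ennreal_mult')
  then have "AE \<omega> in M. (\<Sum>n. ennreal (c n * Z n \<omega>)) \<noteq> \<infinity>"
    using int by (intro nn_integral_PInf_AE) auto
  then show ?thesis
  proof eventually_elim
    case (elim \<omega>)
    then have "summable (\<lambda>n. c n * Z n \<omega>)"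
      using c0 nonneg by (intro summable_suminf_not_top) auto
    then have "(\<lambda>n. c n * Z n \<omega> * (real (Suc n) powr (1 + \<alpha>) / real n powr (1 + \<alpha>))) \<longlonglongrightarrow> 0"
      using tendsto_mult[OF summable_LIMSEQ_zero ratio] by simp
    moreover have "\<forall>\<^sub>F n in sequentially.
        c n * Z n \<omega> * (real (Suc n) powr (1 + \<alpha>) / real n powr (1 + \<alpha>)) = Z n \<omega> / real n powr (1 + \<alpha>)"
      using eventually_gt_at_top[of 0] by eventually_elim (simp add: c_def)
    ultimately show ?case
      by (rule Lim_transform_eventually)
  qed
qed

lemma
  fixes Y Z :: "nat \<Rightarrow> 'a \<Rightarrow> real" and \<alpha> :: real
  assumes int: "\<And>n. integrable M (Z n)" and nonneg: "\<And>n \<omega>. 0 \<le> Z n \<omega>"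
    and S: "\<And>N. (\<Sum>n<N. \<integral>\<omega>. Z n \<omega> \<partial>M) \<le> A + B * real N" and \<alpha>: "0 < \<alpha>"
    and Y: "\<And>n. Y n \<in> borel_measurable M" and dom: "\<And>n \<omega>. \<bar>Y n \<omega>\<bar> \<le> C * Z n \<omega>"
  shows AE_tendsto_zero_div_powr_dominated:
      "AE \<omega> in M. (\<lambda>n. Y n \<omega> / real n powr (1 + \<alpha>)) \<longlonglongrightarrow> 0"
    and integrable_dominated: "integrable M (Y n)"
    and integral_abs_div_powr_tendsto_zero_dominated:
      "(\<lambda>n. \<integral>\<omega>. \<bar>Y n \<omega> / real n powr (1 + \<alpha>)\<bar> \<partial>M) \<longlonglongrightarrow> 0"
proof -
  have dom': "\<bar>Y n \<omega>\<bar> \<le> \<bar>C\<bar> * Z n \<omega>" for n \<omega>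
    using dom[of n \<omega>] mult_right_mono[OF abs_ge_self nonneg] by (rule order_trans)
  show "AE \<omega> in M. (\<lambda>n. Y n \<omega> / real n powr (1 + \<alpha>)) \<longlonglongrightarrow> 0"
    using AE_tendsto_zero_div_powr[OF int nonneg S \<alpha>]
  proof eventually_elim
    case (elim \<omega>)
    show ?case
    proof (rule Lim_null_comparison)
      show "(\<lambda>n. \<bar>C\<bar> * (Z n \<omega> / real n powr (1 + \<alpha>))) \<longlonglongrightarrow> 0"
        by (rule tendsto_mult_right_zero[OF elim])
      show "\<forall>\<^sub>F n in sequentially. norm (Y n \<omega> / real n powr (1 + \<alpha>)) \<le> \<bar>C\<bar> * (Z n \<omega> / real n powr (1 + \<alpha>))"
        using dom' by (simp add: abs_divide divide_right_mono)
    qed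
  qed
  show integrable: "integrable M (Y n)" for n
    using dom' nonneg
    by (intro Bochner_Integration.integrable_bound[OF integrable_mult_right[OF int[of n], where c="\<bar>C\<bar>"] Y])
      (simp add: abs_mult)
  have mean_le: "(\<integral>\<omega>. Z n \<omega> \<partial>M) \<le> A + B * real (Suc n)" for n
  proof -
    have "(\<integral>\<omega>. Z n \<omega> \<partial>M) \<le> (\<Sum>k<Suc n. \<integral>\<omega>. Z k \<omega> \<partial>M)"
      using nonneg by (intro member_le_sum integral_nonneg) auto
    then show ?thesis
      using S by (rule order_trans)
  qed
  show "(\<lambda>n. \<integral>\<omega>. \<bar>Y n \<omega> / real n powr (1 + \<alpha>)\<bar> \<partial>M) \<longlonglongrightarrow> 0"
  proof (rule Lim_null_comparison)
    show "(\<lambda>n. \<bar>C\<bar> * (A + B * real (Suc n)) / real n powr (1 + \<alpha>)) \<longlonglongrightarrow> 0"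
      using \<alpha> by real_asymp
    have "(\<integral>\<omega>. \<bar>Y n \<omega>\<bar> \<partial>M) \<le> \<bar>C\<bar> * (A + B * real (Suc n))" for n
    proof -
      have "(\<integral>\<omega>. \<bar>Y n \<omega>\<bar> \<partial>M) \<le> (\<integral>\<omega>. \<bar>C\<bar> * Z n \<omega> \<partial>M)"
        using integrable int dom' by (intro integral_mono) auto
      also have "\<dots> \<le> \<bar>C\<bar> * (A + B * real (Suc n))"
        using mean_le by (simp add: mult_left_mono)
      finally show ?thesis .
    qed
    then show "\<forall>\<^sub>F n in sequentially. norm (\<integral>\<omega>. \<bar>Y n \<omega> / real n powr (1 + \<alpha>)\<bar> \<partial>M)
        \<le> \<bar>C\<bar> * (A + B * real (Suc n)) / real n powr (1 + \<alpha>)"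
      by (simp add: abs_divide divide_right_mono)
  qed
qed

theorem mainTheorem17:
  fixes K :: "'a::polish_space \<Rightarrow> 'a measure"
    and Px :: "'a \<Rightarrow> 'a stream measure"
    and \<tau> :: "'a stream \<Rightarrow> enat"
    and u f :: "'a \<Rightarrow> real"
    and \<alpha> :: real
  assumes "markov_chain_law K Px"
    and "theta_compatible Px \<tau>"
    and "\<forall>x. (\<integral>\<^sup>+\<omega>. ennreal_of_enat (\<tau> \<omega>) \<partial>Px x) < \<infinity>"
    and "drift_function Px \<tau> u"
    and "\<alpha> > 0"
    and "f \<in> Espace 1 Px u"
  shows "\<forall>x. (AE \<omega> in Px x. (\<lambda>n. f (\<omega> !! n) / real n powr (1 + \<alpha>)) \<longlonglongrightarrow> 0)
           \<and> (\<forall>n. integrable (Px x) (\<lambda>\<omega>. f (\<omega> !! n)))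
           \<and> (\<lambda>n. \<integral>\<omega>. \<bar>f (\<omega> !! n) / real n powr (1 + \<alpha>)\<bar> \<partial>Px x) \<longlonglongrightarrow> 0"
proof
  fix x
  note mc = assms(1) and dr = assms(4)
  obtain C where f: "f \<in> borel_measurable borel" and C: "\<And>y. \<bar>f y\<bar> powr 1 / wfun Px u y \<le> C"
    using assms(6) unfolding Espace_def Fspace_def by blast
  have W1: "1 \<le> wfun Px u y" for y
    using wfun_ge_1[OF drift_functionD(4)[OF dr]] .
  then have W0: "0 \<le> wfun Px u y" for y
    by (rule order_trans[OF zero_le_one])
  have dom: "\<bar>f y\<bar> \<le> C * wfun Px u y" for y
    using C[of y] W1[of y] by (simp add: pos_divide_le_eq)
  note hyps = integrable_wfun_snth[OF mc dr] W0 sum_integral_wfun_snth_le[OF mc dr] assms(5)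
    measurable_snth_markov_chain_law[OF mc f] dom
  note dominated = AE_tendsto_zero_div_powr_dominated integrable_dominated
    integral_abs_div_powr_tendsto_zero_dominated
  show "(AE \<omega> in Px x. (\<lambda>n. f (\<omega> !! n) / real n powr (1 + \<alpha>)) \<longlonglongrightarrow> 0)
      \<and> (\<forall>n. integrable (Px x) (\<lambda>\<omega>. f (\<omega> !! n)))
      \<and> (\<lambda>n. \<integral>\<omega>. \<bar>f (\<omega> !! n) / real n powr (1 + \<alpha>)\<bar> \<partial>Px x) \<longlonglongrightarrow> 0"
    using dominated[where M="Px x" and Z="\<lambda>n \<omega>. wfun Px u (\<omega> !! n)"
        and Y="\<lambda>n \<omega>. f (\<omega> !! n)", OF hyps] by blast
qed

end
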